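(* Let $f\in\mathcal{F}$, let $A$ be a finite subset of $f^{-1}(E)$ and let $b\in\mathbb{C}$. Then for every $\varepsilon>0$ there exists $g\in\mathcal{F}(f,A)$ such that $d_{\mathcal{F}}(f,g)<\varepsilon$ and $g(b)\in E$.
   Context: $\mathcal{F}$ is a Fréchet space of entire maps containing all complex polynomial maps, whose topology is finer than the topology of local uniform convergence on $\mathbb{C}$; $(\|\cdot\|_j)_{j\ge0}$ is a sequence of seminorms defining its topology and $d_{\mathcal{F}}(f,g)=\sum_{j\ge0}2^{-j}\min\{1,\|f-g\|_j\}$. $E$ is a countable dense subset of $\mathbb{C}$. For $f\in\mathcal{F}$ and $A\subseteq\mathbb{C}$, $\mathcal{F}(f,A)=\{g\in\mathcal{F}: g|_A=f|_A \text{ and } g'|_A=f'|_A\}$. *)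

theory Defs
  imports "HOL-Analysis.Analysis" "HOL-Computational_Algebra.Polynomial"
begin

text \<open>A Frechet space of entire maps: a complex vector space FF of entire functions,
  containing all polynomial maps, with a countable family of seminorms sn j
  defining a Hausdorff, complete (metrizable) locally convex topology which is finer
  than the topology of local uniform convergence on the complex plane.\<close>

definition frechet_entire ::
  "(complex \<Rightarrow> complex) set \<Rightarrow> (nat \<Rightarrow> (complex \<Rightarrow> complex) \<Rightarrow> real) \<Rightarrow> bool" where
  "frechet_entire FF sn \<longleftrightarrow>
     (\<forall>f\<in>FF. f holomorphic_on UNIV) \<and>
     (\<lambda>z. 0) \<in> FF \<and>
     (\<forall>f\<in>FF. \<forall>g\<in>FF. (\<lambda>z. f z + g z) \<in> FF) \<and>
     (\<forall>c. \<forall>f\<in>FF. (\<lambda>z. c * f z) \<in> FF) \<and>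
     (\<forall>p. (\<lambda>z. poly p z) \<in> FF) \<and>
     (\<forall>j. \<forall>f\<in>FF. 0 \<le> sn j f) \<and>
     (\<forall>j. \<forall>f\<in>FF. \<forall>g\<in>FF. sn j (\<lambda>z. f z + g z) \<le> sn j f + sn j g) \<and>
     (\<forall>j c. \<forall>f\<in>FF. sn j (\<lambda>z. c * f z) = norm c * sn j f) \<and>
     (\<forall>f\<in>FF. (\<forall>j. sn j f = 0) \<longrightarrow> f = (\<lambda>z. 0)) \<and>
     (\<forall>u. (\<forall>n. u n \<in> FF) \<longrightarrow>
          (\<forall>j. \<forall>e>0. \<exists>N. \<forall>m\<ge>N. \<forall>n\<ge>N. sn j (\<lambda>z. u m z - u n z) < e) \<longrightarrow>
          (\<exists>g\<in>FF. \<forall>j. (\<lambda>n. sn j (\<lambda>z. u n z - g z)) \<longlonglongrightarrow> 0)) \<and>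
     (\<forall>K. compact K \<longrightarrow> (\<exists>N C. \<forall>f\<in>FF. \<forall>z\<in>K. norm (f z) \<le> C * (\<Sum>j\<le>N. sn j f)))"

definition dF :: "(nat \<Rightarrow> (complex \<Rightarrow> complex) \<Rightarrow> real) \<Rightarrow> (complex \<Rightarrow> complex) \<Rightarrow> (complex \<Rightarrow> complex) \<Rightarrow> real" where
  "dF sn f g = (\<Sum>j. (1/2)^j * min 1 (sn j (\<lambda>z. f z - g z)))"

definition interp_class ::
  "(complex \<Rightarrow> complex) set \<Rightarrow> (complex \<Rightarrow> complex) \<Rightarrow> complex set \<Rightarrow> (complex \<Rightarrow> complex) set" where
  "interp_class FF f A = {g\<in>FF. \<forall>a\<in>A. g a = f a \<and> deriv g a = deriv f a}"

end

theory Submission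
  imports Defs
begin

text \<open>Let \<open>q\<close> be the monic polynomial whose zeros are the points of \<open>A\<close>. Every perturbation
  \<open>g = f + c q\<^sup>2\<close> lies in \<open>F(f, A)\<close>, and \<open>d\<^sub>F(f, g) \<rightarrow> 0\<close> as \<open>c \<rightarrow> 0\<close>: every seminorm of
  \<open>c q\<^sup>2\<close> scales with \<open>|c|\<close>, and the weighted series defining \<open>d\<^sub>F\<close> converges uniformly in \<open>|c|\<close>
  by the M-test. If \<open>b \<notin> A\<close>, then \<open>q(b) \<noteq> 0\<close>, so density of \<open>E\<close> lets us choose a small \<open>c\<close>
  with \<open>g(b) = f(b) + c q(b)\<^sup>2 \<in> E\<close>; if \<open>b \<in> A\<close>, then \<open>f(b) \<in> E\<close> and \<open>c = 0\<close> works.\<close>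

lemma frechet_entire_holomorphic: "frechet_entire FF sn \<Longrightarrow> f \<in> FF \<Longrightarrow> f holomorphic_on UNIV"
  unfolding frechet_entire_def by (elim conjE) simp

lemma frechet_entire_add:
  "frechet_entire FF sn \<Longrightarrow> f \<in> FF \<Longrightarrow> g \<in> FF \<Longrightarrow> (\<lambda>z. f z + g z) \<in> FF"
  unfolding frechet_entire_def by (elim conjE) simp

lemma frechet_entire_scale: "frechet_entire FF sn \<Longrightarrow> f \<in> FF \<Longrightarrow> (\<lambda>z. c * f z) \<in> FF"
  unfolding frechet_entire_def by (elim conjE) simp

lemma frechet_entire_poly: "frechet_entire FF sn \<Longrightarrow> poly p \<in> FF"
  unfolding frechet_entire_def by (elim conjE) simp

lemma frechet_entire_seminorm_nonneg: "frechet_entire FF sn \<Longrightarrow> f \<in> FF \<Longrightarrow> 0 \<le> sn j f"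
  unfolding frechet_entire_def by (elim conjE) simp

lemma frechet_entire_seminorm_scale:
  "frechet_entire FF sn \<Longrightarrow> f \<in> FF \<Longrightarrow> sn j (\<lambda>z. c * f z) = norm c * sn j f"
  unfolding frechet_entire_def by (elim conjE) simp

lemma continuous_on_weighted_min_series:
  fixes s :: "nat \<Rightarrow> real"
  assumes "\<And>j. 0 \<le> s j"
  shows "continuous_on {0..} (\<lambda>r. \<Sum>j. (1/2)^j * min 1 (r * s j))"
proof (rule uniform_limit_theorem)
  show "uniform_limit {0..} (\<lambda>n r. \<Sum>j<n. (1/2)^j * min 1 (r * s j))
          (\<lambda>r. \<Sum>j. (1/2)^j * min 1 (r * s j)) sequentially"
  proof (rule Weierstrass_m_test[where M = "\<lambda>j. (1/2)^j"])
    fix j and r :: real assume "r \<in> {0..}"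
    then have "0 \<le> min 1 (r * s j)" using assms by simp
    then show "norm ((1/2)^j * min 1 (r * s j)) \<le> (1/2)^j"
      by (simp add: mult_left_le)
  qed simp
qed (intro always_eventually allI continuous_intros | simp)+

lemma dF_add_scaled_small:
  assumes fe: "frechet_entire FF sn" and "h \<in> FF" and "\<epsilon> > 0"
  obtains \<delta> where "\<delta> > 0" "\<And>c. norm c < \<delta> \<Longrightarrow> dF sn f (\<lambda>z. f z + c * h z) < \<epsilon>"
proof -
  define S where "S = (\<lambda>r. \<Sum>j. (1/2::real)^j * min 1 (r * sn j h))"
  have "continuous_on {0..} S"
    unfolding S_def using frechet_entire_seminorm_nonneg[OF fe \<open>h \<in> FF\<close>]
    by (rule continuous_on_weighted_min_series)
  moreover have "S 0 = 0" by (simp add: S_def)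
  ultimately obtain \<delta> where "\<delta> > 0" and \<delta>: "\<And>r. r \<ge> 0 \<Longrightarrow> r < \<delta> \<Longrightarrow> S r < \<epsilon>"
    using \<open>\<epsilon> > 0\<close> unfolding continuous_on_iff
    by (drule_tac bspec[of _ _ 0]) (force simp: dist_real_def)+
  have "sn j (\<lambda>z. f z - (f z + c * h z)) = norm c * sn j h" for j c
  proof -
    have "(\<lambda>z. f z - (f z + c * h z)) = (\<lambda>z. (- c) * h z)" by simp
    then show ?thesis using frechet_entire_seminorm_scale[OF fe \<open>h \<in> FF\<close>, of j "- c"] by simp
  qed
  then have "dF sn f (\<lambda>z. f z + c * h z) = S (norm c)" for c
    by (simp add: dF_def S_def)
  with \<open>\<delta> > 0\<close> \<delta> show thesis by (intro that) auto
qed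

lemma poly_prod_linear_eq_0_iff:
  fixes A :: "'a::idom set"
  assumes "finite A"
  shows "poly (\<Prod>a\<in>A. [:- a, 1:]) z = 0 \<longleftrightarrow> z \<in> A"
  using assms by (simp add: poly_prod)

lemma add_scaled_square_in_interp_class:
  assumes fe: "frechet_entire FF sn" and "f \<in> FF" and q: "\<And>a. a \<in> A \<Longrightarrow> poly q a = 0"
  shows "(\<lambda>z. f z + c * poly (q^2) z) \<in> interp_class FF f A"
  unfolding interp_class_def
proof (intro CollectI conjI ballI)
  show "(\<lambda>z. f z + c * poly (q^2) z) \<in> FF"
    by (intro frechet_entire_add[OF fe \<open>f \<in> FF\<close>] frechet_entire_scale[OF fe] frechet_entire_poly[OF fe])
  fix a assume "a \<in> A"
  then show "f a + c * poly (q^2) a = f a" using q by simp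
  have "f field_differentiable at a"
    using frechet_entire_holomorphic[OF fe \<open>f \<in> FF\<close>] by (simp add: holomorphic_on_imp_differentiable_at)
  moreover have poly_deriv: "((\<lambda>z. c * poly (q^2) z) has_field_derivative c * poly (pderiv (q^2)) a) (at a)"
    by (intro DERIV_cmult poly_DERIV)
  ultimately have "deriv (\<lambda>z. f z + c * poly (q^2) z) a = deriv f a + deriv (\<lambda>z. c * poly (q^2) z) a"
    by (intro deriv_add) (auto simp only: field_differentiable_def)
  also have "deriv (\<lambda>z. c * poly (q^2) z) a = c * poly (pderiv (q^2)) a"
    using poly_deriv by (rule DERIV_imp_deriv)
  also have "poly (pderiv (q^2)) a = 0"
    using q[OF \<open>a \<in> A\<close>] by (simp add: pderiv_power)
  finally show "deriv (\<lambda>z. f z + c * poly (q^2) z) a = deriv f a" by simp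
qed

lemma dense_small_multiple_shift:
  fixes E :: "'a::real_normed_field set"
  assumes "closure E = UNIV" and "w \<noteq> 0" and "\<delta> > 0"
  obtains c where "norm c < \<delta>" and "z + c * w \<in> E"
proof -
  have "\<delta> * norm w > 0" using assms by simp
  then obtain e where "e \<in> E" and "dist e z < \<delta> * norm w"
    using closure_approachable[of z E] \<open>closure E = UNIV\<close> by blast
  then show thesis
    using \<open>w \<noteq> 0\<close> by (intro that[of "(e - z) / w"]) (simp_all add: dist_norm norm_divide divide_less_eq)
qed

theorem lemma2p3:
  fixes FF :: "(complex \<Rightarrow> complex) set"
    and sn :: "nat \<Rightarrow> (complex \<Rightarrow> complex) \<Rightarrow> real"
    and E :: "complex set" and f :: "complex \<Rightarrow> complex"
    and A :: "complex set" and b :: complex and \<epsilon> :: real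
  assumes "frechet_entire FF sn"
    and "countable E" and "closure E = UNIV"
    and "f \<in> FF"
    and "finite A" and "A \<subseteq> f -` E"
    and "\<epsilon> > 0"
  shows "\<exists>g\<in>interp_class FF f A. dF sn f g < \<epsilon> \<and> g b \<in> E"
proof -
  note fe = \<open>frechet_entire FF sn\<close>
  define q where "q = (\<Prod>a\<in>A. [:- a, 1:])"
  have q_eq_0_iff: "poly q z = 0 \<longleftrightarrow> z \<in> A" for z
    unfolding q_def using \<open>finite A\<close> by (rule poly_prod_linear_eq_0_iff)
  define g where "g c = (\<lambda>z. f z + c * poly (q^2) z)" for c
  have g_interp: "g c \<in> interp_class FF f A" for c
    unfolding g_def using fe \<open>f \<in> FF\<close> by (rule add_scaled_square_in_interp_class) (simp add: q_eq_0_iff)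
  obtain \<delta> where "\<delta> > 0" and g_close: "\<And>c. norm c < \<delta> \<Longrightarrow> dF sn f (g c) < \<epsilon>"
    unfolding g_def using dF_add_scaled_small[OF fe frechet_entire_poly[OF fe] \<open>\<epsilon> > 0\<close>] by blast
  obtain c where "norm c < \<delta>" and "g c b \<in> E"
  proof (cases "b \<in> A")
    case True
    then show thesis using \<open>A \<subseteq> f -` E\<close> \<open>\<delta> > 0\<close> by (intro that[of 0]) (auto simp: g_def)
  next
    case False
    then have "poly (q^2) b \<noteq> 0" using q_eq_0_iff by simp
    then obtain c where "norm c < \<delta>" and "f b + c * poly (q^2) b \<in> E"
      using \<open>closure E = UNIV\<close> \<open>\<delta> > 0\<close> by (metis dense_small_multiple_shift)
    then show thesis by (intro that[of c]) (simp_all add: g_def)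
  qed
  then show ?thesis using g_interp g_close by blast
qed

end
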